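(* Let $u:\Sigma\to M$ be a smooth $(j,J)$-holomorphic map and $z_0\in\Sigma$ with $j^ku(z_0)=0$. Then $j^{k+1}u(z_0)=0$ if and only if $\sigma^{k+1}(J,(j,u),z_0)=0$.
   Context: $(M,J)$ almost complex of real dimension $2n$, $(\Sigma,j)$ a Riemann surface; $u$ is $(j,J)$-holomorphic if $J\circ du=du\circ j$. $j^ku(z)=0$ means all derivatives of $u$ of orders $1,\dots,k$ vanish at $z$; then $d^{k+1}u(z)$ is a well-defined symmetric $(k+1)$-linear map $T_z\Sigma\to T_{u(z)}M$. The space of symmetric $\ell$-linear maps $T_z\Sigma\to T_xM$ splits relative to $(j_z,J_x)$ into the holomorphic part $H^{(\ell,0)}_{(z,x)}$ (complex multilinear maps), the antiholomorphic part and mixed parts; $\pi^{hol}$ is the projection to $H^{(\ell,0)}$. The principal holomorphic jet is $\sigma^{k+1}(J,(j,u),z_0):=\pi^{hol}(d^{k+1}u(z_0))$. *)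

theory Defs
  imports "HOL-Analysis.Analysis"
begin

text \<open>The Riemann surface is an open set U of the
complex plane, carrying an almost complex structure j (a field of real-linear
maps with j z (j z v) = - v); the almost complex manifold is an open set W of a
Euclidean space 'm carrying an almost complex structure J.\<close>

text \<open>Higher derivative d^l f(x) as a real l-linear map, evaluated on a list of
l direction vectors (iterated Frechet derivatives).\<close>
fun hderiv :: "nat \<Rightarrow> ('a::real_normed_vector \<Rightarrow> 'b::real_normed_vector) \<Rightarrow> 'a \<Rightarrow> 'a list \<Rightarrow> 'b" where
  "hderiv 0 f x vs = f x"
| "hderiv (Suc l) f x [] = 0"
| "hderiv (Suc l) f x (v # vs) = frechet_derivative (\<lambda>y. hderiv l f y vs) (at x) v"

definition smooth_on :: "'a::real_normed_vector set \<Rightarrow> ('a \<Rightarrow> 'b::real_normed_vector) \<Rightarrow> bool" where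
  "smooth_on S f \<longleftrightarrow> (\<forall>l vs. length vs = l \<longrightarrow> (\<lambda>y. hderiv l f y vs) differentiable_on S)"

definition almost_complex_structure :: "'a set \<Rightarrow> ('a::real_normed_vector \<Rightarrow> 'a \<Rightarrow> 'a) \<Rightarrow> bool" where
  "almost_complex_structure S J \<longleftrightarrow>
     (\<forall>x\<in>S. linear (J x) \<and> (\<forall>v. J x (J x v) = - v)) \<and> (\<forall>v. smooth_on S (\<lambda>x. J x v))"

definition jJ_holomorphic :: "complex set \<Rightarrow> (complex \<Rightarrow> complex \<Rightarrow> complex) \<Rightarrow>
    ('m::real_normed_vector \<Rightarrow> 'm \<Rightarrow> 'm) \<Rightarrow> (complex \<Rightarrow> 'm) \<Rightarrow> bool" where
  "jJ_holomorphic U j J u \<longleftrightarrow>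
     (\<forall>z\<in>U. \<forall>v. J (u z) (frechet_derivative u (at z) v) = frechet_derivative u (at z) (j z v))"

definition jet_vanishes :: "nat \<Rightarrow> (complex \<Rightarrow> 'm::real_normed_vector) \<Rightarrow> complex \<Rightarrow> bool" where
  "jet_vanishes k u z \<longleftrightarrow> (\<forall>l\<in>{1..k}. \<forall>vs. length vs = l \<longrightarrow> hderiv l u z vs = 0)"

text \<open>Projection onto maps complex-linear in slot i (w.r.t. jz on the source,
Jx on the target): A |-> 1/2 (A - Jx o A o (jz in slot i)).\<close>
definition slot_proj :: "('m::real_vector \<Rightarrow> 'm) \<Rightarrow> ('a \<Rightarrow> 'a) \<Rightarrow> nat \<Rightarrow> ('a list \<Rightarrow> 'm) \<Rightarrow> 'a list \<Rightarrow> 'm" where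
  "slot_proj Jx jz i A vs = (1/2) *\<^sub>R (A vs - Jx (A (vs[i := jz (vs ! i)])))"

fun pihol_aux :: "('m::real_vector \<Rightarrow> 'm) \<Rightarrow> ('a \<Rightarrow> 'a) \<Rightarrow> nat \<Rightarrow> ('a list \<Rightarrow> 'm) \<Rightarrow> 'a list \<Rightarrow> 'm" where
  "pihol_aux Jx jz 0 A = A"
| "pihol_aux Jx jz (Suc i) A = slot_proj Jx jz i (pihol_aux Jx jz i A)"

text \<open>pi^hol on l-linear maps: projection onto H^(l,0) (complex multilinear part).\<close>
definition pi_hol :: "('m::real_vector \<Rightarrow> 'm) \<Rightarrow> ('a \<Rightarrow> 'a) \<Rightarrow> nat \<Rightarrow> ('a list \<Rightarrow> 'm) \<Rightarrow> 'a list \<Rightarrow> 'm" where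
  "pi_hol Jx jz l A = pihol_aux Jx jz l A"

definition principal_hol_jet :: "nat \<Rightarrow> ('m::real_normed_vector \<Rightarrow> 'm \<Rightarrow> 'm) \<Rightarrow>
    (complex \<Rightarrow> complex \<Rightarrow> complex) \<Rightarrow> (complex \<Rightarrow> 'm) \<Rightarrow> complex \<Rightarrow> complex list \<Rightarrow> 'm" where
  "principal_hol_jet l J j u z0 = pi_hol (J (u z0)) (j z0) l (hderiv l u z0)"

end

theory Submission
  imports Defs
begin

text \<open>Differentiating the Cauchy--Riemann equation \<open>du(j w) = J(u) du(w)\<close> \<open>k\<close> times at \<open>z0\<close>,
  every term in which a derivative falls on \<open>J \<circ> u\<close> or on \<open>j\<close> still contains a derivative of \<open>u\<close>
  of order at most \<open>k\<close>, and these vanish at \<open>z0\<close>.  What remains says that \<open>d^(k+1) u(z0)\<close> is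
  complex linear in its last slot; by the symmetry of higher derivatives it is complex linear in
  every slot, so it is fixed by \<open>\<pi>^hol\<close> and vanishes iff the principal holomorphic jet does.\<close>

section \<open>Finite-order smoothness and the calculus of higher derivatives\<close>

abbreviation dir_deriv :: "('a::real_normed_vector \<Rightarrow> 'b::real_normed_vector) \<Rightarrow> 'a \<Rightarrow> 'a \<Rightarrow> 'b" where
  "dir_deriv f v \<equiv> (\<lambda>y. frechet_derivative f (at y) v)"

definition Ck_on :: "nat \<Rightarrow> 'a::real_normed_vector set \<Rightarrow> ('a \<Rightarrow> 'b::real_normed_vector) \<Rightarrow> bool" where
  "Ck_on n S f \<longleftrightarrow> (\<forall>l\<le>n. \<forall>vs. length vs = l \<longrightarrow> (\<lambda>y. hderiv l f y vs) differentiable_on S)"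

definition vanishes_to_order :: "nat \<Rightarrow> ('a::real_normed_vector \<Rightarrow> 'b::real_normed_vector) \<Rightarrow> 'a \<Rightarrow> bool" where
  "vanishes_to_order k f x \<longleftrightarrow> (\<forall>l<k. \<forall>vs. length vs = l \<longrightarrow> hderiv l f x vs = 0)"

lemma frechet_derivative_cong_open:
  assumes "open S" "x \<in> S" "\<And>y. y \<in> S \<Longrightarrow> f y = g y"
  shows "frechet_derivative f (at x) = frechet_derivative g (at x)"
proof -
  have "(f has_derivative f') (at x) \<longleftrightarrow> (g has_derivative f') (at x)" for f'
    using assms has_derivative_transform_within_open by metis
  then show ?thesis unfolding frechet_derivative_def by simp
qed

lemma hderiv_cong_open:
  assumes "open S" "x \<in> S" "\<And>y. y \<in> S \<Longrightarrow> f y = g y"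
  shows "hderiv l f x vs = hderiv l g x vs"
  using assms(2)
proof (induction l arbitrary: x vs)
  case (Suc l)
  then show ?case
    using frechet_derivative_cong_open[OF assms(1) Suc.prems, of "\<lambda>y. hderiv l f y _"]
    by (cases vs) simp_all
qed (use assms in simp)

lemma hderiv_snoc:
  "length vs = l \<Longrightarrow> hderiv (Suc l) f x (vs @ [v]) = hderiv l (dir_deriv f v) x vs"
proof (induction vs arbitrary: l x)
  case (Cons a vs)
  then obtain l' where l: "l = Suc l'" "length vs = l'" by auto
  have "(\<lambda>y. hderiv (Suc l') f y (vs @ [v])) = (\<lambda>y. hderiv l' (dir_deriv f v) y vs)"
    using Cons.IH l by auto
  then show ?case using l by simp
qed simp

lemma differentiable_on_cong_open:
  assumes "open S" "\<And>y. y \<in> S \<Longrightarrow> f y = g y" "f differentiable_on S"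
  shows "g differentiable_on S"
  unfolding differentiable_on_eq_differentiable_at[OF assms(1)]
proof
  fix x assume x: "x \<in> S"
  then obtain f' where "(f has_derivative f') (at x)"
    using assms(3) unfolding differentiable_on_eq_differentiable_at[OF assms(1)] differentiable_def by blast
  then have "(g has_derivative f') (at x)"
    by (rule has_derivative_transform_within_open[OF _ assms(1) x assms(2)])
  then show "g differentiable at x" unfolding differentiable_def by blast
qed

lemma has_derivative_frechet_derivative_open:
  "open S \<Longrightarrow> f differentiable_on S \<Longrightarrow> x \<in> S \<Longrightarrow> (f has_derivative frechet_derivative f (at x)) (at x)"
  using differentiable_on_eq_differentiable_at frechet_derivative_works by blast

lemma Ck_on_cong_open:
  assumes "open S" "\<And>y. y \<in> S \<Longrightarrow> f y = g y" "Ck_on n S f"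
  shows "Ck_on n S g"
  unfolding Ck_on_def
proof (intro allI impI)
  fix l and vs :: "'a list" assume "l \<le> n" "length vs = l"
  then have "(\<lambda>y. hderiv l f y vs) differentiable_on S" using assms(3) unfolding Ck_on_def by blast
  moreover have "hderiv l f y vs = hderiv l g y vs" if "y \<in> S" for y
    using hderiv_cong_open[OF assms(1) that assms(2)] .
  ultimately show "(\<lambda>y. hderiv l g y vs) differentiable_on S"
    by (rule differentiable_on_cong_open[OF assms(1), rotated])
qed

lemma Ck_on_0: "Ck_on 0 S f \<longleftrightarrow> f differentiable_on S"
  unfolding Ck_on_def by simp

lemma Ck_on_Suc:
  fixes f :: "'a::real_normed_vector \<Rightarrow> 'b::real_normed_vector"
  shows "Ck_on (Suc n) S f \<longleftrightarrow> f differentiable_on S \<and> (\<forall>v. Ck_on n S (dir_deriv f v))"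
proof -
  have split: "(\<forall>l\<le>Suc n. \<forall>vs. length vs = l \<longrightarrow> P l vs) \<longleftrightarrow>
      P 0 [] \<and> (\<forall>v. \<forall>l\<le>n. \<forall>vs. length vs = l \<longrightarrow> P (Suc l) (vs @ [v]))"
    for P :: "nat \<Rightarrow> 'a list \<Rightarrow> bool"
  proof (intro iffI allI impI)
    fix l and vs :: "'a list"
    assume P: "P 0 [] \<and> (\<forall>v. \<forall>l\<le>n. \<forall>vs. length vs = l \<longrightarrow> P (Suc l) (vs @ [v]))"
      and l: "l \<le> Suc n" "length vs = l"
    show "P l vs"
    proof (cases vs rule: rev_cases)
      case (snoc ws v)
      then show ?thesis using P l by auto
    qed (use P l in simp)
  qed auto
  show ?thesis
    unfolding Ck_on_def split by (simp add: hderiv_snoc)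
qed

lemma Ck_on_mono: "Ck_on n S f \<Longrightarrow> m \<le> n \<Longrightarrow> Ck_on m S f"
  unfolding Ck_on_def by auto

lemma smooth_on_iff_Ck_on: "smooth_on S f \<longleftrightarrow> (\<forall>n. Ck_on n S f)"
  unfolding smooth_on_def Ck_on_def by auto

lemma smooth_on_dir_deriv: "smooth_on S f \<Longrightarrow> smooth_on S (dir_deriv f v)"
  unfolding smooth_on_iff_Ck_on using Ck_on_Suc by blast

lemma smooth_on_imp_differentiable_on: "smooth_on S f \<Longrightarrow> f differentiable_on S"
  unfolding smooth_on_iff_Ck_on using Ck_on_0 by blast

lemma Ck_on_has_derivative_hderiv:
  "Ck_on l S f \<Longrightarrow> open S \<Longrightarrow> x \<in> S \<Longrightarrow> length vs = l \<Longrightarrow>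
   ((\<lambda>y. hderiv l f y vs) has_derivative frechet_derivative (\<lambda>y. hderiv l f y vs) (at x)) (at x)"
  unfolding Ck_on_def using has_derivative_frechet_derivative_open by blast

lemma hderiv_bounded_linear:
  fixes f :: "'a::real_normed_vector \<Rightarrow> 'b::real_normed_vector" and T :: "'b \<Rightarrow> 'c::real_normed_vector"
  assumes T: "bounded_linear T" and S: "open S"
  shows "Ck_on l S f \<Longrightarrow> x \<in> S \<Longrightarrow> length vs = l \<Longrightarrow> hderiv l (\<lambda>y. T (f y)) x vs = T (hderiv l f x vs)"
proof (induction l arbitrary: x vs)
  case (Suc l)
  then obtain v ws where vs: "vs = v # ws" "length ws = l" by (metis length_Suc_conv)
  have f: "Ck_on l S f" using Suc.prems Ck_on_mono by fastforce
  have "frechet_derivative (\<lambda>y. hderiv l (\<lambda>y. T (f y)) y ws) (at x)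
      = frechet_derivative (\<lambda>y. T (hderiv l f y ws)) (at x)"
    by (rule frechet_derivative_cong_open[OF S Suc.prems(2)]) (rule Suc.IH[OF f _ vs(2)])
  also have "\<dots> = (\<lambda>h. T (frechet_derivative (\<lambda>y. hderiv l f y ws) (at x) h))"
    by (rule frechet_derivative_at[symmetric])
      (rule bounded_linear.has_derivative[OF T Ck_on_has_derivative_hderiv[OF f S Suc.prems(2) vs(2)]])
  finally show ?case using vs by simp
qed simp

lemma Ck_on_bounded_linear:
  fixes f :: "'a::real_normed_vector \<Rightarrow> 'b::real_normed_vector" and T :: "'b \<Rightarrow> 'c::real_normed_vector"
  assumes T: "bounded_linear T" and S: "open S"
  shows "Ck_on n S f \<Longrightarrow> Ck_on n S (\<lambda>y. T (f y))"
proof (induction n arbitrary: f)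
  case 0
  show ?case unfolding Ck_on_0 differentiable_on_eq_differentiable_at[OF S]
  proof
    fix x assume x: "x \<in> S"
    have "(f has_derivative frechet_derivative f (at x)) (at x)"
      using has_derivative_frechet_derivative_open[OF S _ x] 0 Ck_on_0 by blast
    then show "(\<lambda>y. T (f y)) differentiable at x"
      using bounded_linear.has_derivative[OF T] differentiable_def by blast
  qed
next
  case (Suc n)
  have f: "f differentiable_on S" and df: "\<And>v. Ck_on n S (dir_deriv f v)"
    using Suc.prems Ck_on_Suc by blast+
  have "Ck_on n S (\<lambda>y. T (f y))"
    by (rule Suc.IH[OF Ck_on_mono[OF Suc.prems]]) simp
  then have "(\<lambda>y. T (f y)) differentiable_on S"
    using Ck_on_mono[of n S _ 0] by (simp add: Ck_on_0)
  moreover have "Ck_on n S (dir_deriv (\<lambda>y. T (f y)) v)" for v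
  proof (rule Ck_on_cong_open[OF S _ Suc.IH[OF df[of v]]])
    fix y assume y: "y \<in> S"
    show "T (dir_deriv f v y) = dir_deriv (\<lambda>y. T (f y)) v y"
      by (subst frechet_derivative_at[OF bounded_linear.has_derivative[OF T
            has_derivative_frechet_derivative_open[OF S f y]], symmetric]) simp
  qed
  ultimately show ?case using Ck_on_Suc by blast
qed

lemma hderiv_const: "hderiv (Suc l) (\<lambda>y. c) x vs = 0"
proof (induction l arbitrary: x vs)
  case 0
  show ?case by (cases vs) simp_all
next
  case (Suc l)
  then show ?case by (cases vs) simp_all
qed

lemma hderiv_zero: "hderiv l (\<lambda>y. 0) x vs = 0"
  by (cases l) (simp_all add: hderiv_const)

lemma Ck_on_const: "Ck_on n S (\<lambda>y. c)"
  unfolding Ck_on_def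
proof (intro allI impI)
  fix l vs
  show "(\<lambda>y. hderiv l (\<lambda>y. c) y vs) differentiable_on S"
    by (cases l) (simp_all add: hderiv_const)
qed

lemma hderiv_add:
  fixes f g :: "'a::real_normed_vector \<Rightarrow> 'b::real_normed_vector"
  assumes S: "open S"
  shows "Ck_on l S f \<Longrightarrow> Ck_on l S g \<Longrightarrow> x \<in> S \<Longrightarrow> length vs = l \<Longrightarrow>
     hderiv l (\<lambda>y. f y + g y) x vs = hderiv l f x vs + hderiv l g x vs"
proof (induction l arbitrary: x vs)
  case (Suc l)
  then obtain v ws where vs: "vs = v # ws" "length ws = l" by (metis length_Suc_conv)
  have f: "Ck_on l S f" and g: "Ck_on l S g" using Suc.prems Ck_on_mono by fastforce+
  have "frechet_derivative (\<lambda>y. hderiv l (\<lambda>y. f y + g y) y ws) (at x)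
      = frechet_derivative (\<lambda>y. hderiv l f y ws + hderiv l g y ws) (at x)"
    by (rule frechet_derivative_cong_open[OF S Suc.prems(3)]) (rule Suc.IH[OF f g _ vs(2)])
  also have "\<dots> = (\<lambda>h. frechet_derivative (\<lambda>y. hderiv l f y ws) (at x) h
                      + frechet_derivative (\<lambda>y. hderiv l g y ws) (at x) h)"
    by (rule frechet_derivative_at[symmetric])
      (rule has_derivative_add[OF Ck_on_has_derivative_hderiv[OF f S Suc.prems(3) vs(2)]
                                  Ck_on_has_derivative_hderiv[OF g S Suc.prems(3) vs(2)]])
  finally show ?case using vs by simp
qed simp

lemma Ck_on_add:
  fixes f g :: "'a::real_normed_vector \<Rightarrow> 'b::real_normed_vector"
  assumes S: "open S"
  shows "Ck_on n S f \<Longrightarrow> Ck_on n S g \<Longrightarrow> Ck_on n S (\<lambda>y. f y + g y)"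
proof (induction n arbitrary: f g)
  case 0
  then show ?case unfolding Ck_on_0 by (simp add: differentiable_on_add)
next
  case (Suc n)
  have f: "f differentiable_on S" and df: "\<And>v. Ck_on n S (dir_deriv f v)"
    and g: "g differentiable_on S" and dg: "\<And>v. Ck_on n S (dir_deriv g v)"
    using Suc.prems Ck_on_Suc by blast+
  have "(\<lambda>y. f y + g y) differentiable_on S" using f g by (simp add: differentiable_on_add)
  moreover have "Ck_on n S (dir_deriv (\<lambda>y. f y + g y) v)" for v
  proof (rule Ck_on_cong_open[OF S _ Suc.IH[OF df[of v] dg[of v]]])
    fix y assume y: "y \<in> S"
    show "dir_deriv f v y + dir_deriv g v y = dir_deriv (\<lambda>y. f y + g y) v y"
      by (subst frechet_derivative_at[OF has_derivative_add[OF
            has_derivative_frechet_derivative_open[OF S f y]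
            has_derivative_frechet_derivative_open[OF S g y]], symmetric]) simp
  qed
  ultimately show ?case using Ck_on_Suc by blast
qed

lemma Ck_on_sum:
  fixes f :: "'i \<Rightarrow> 'a::real_normed_vector \<Rightarrow> 'b::real_normed_vector"
  assumes S: "open S" and I: "finite I"
  shows "(\<And>i. i \<in> I \<Longrightarrow> Ck_on n S (f i)) \<Longrightarrow> Ck_on n S (\<lambda>y. \<Sum>i\<in>I. f i y)"
  using I
proof (induction I rule: finite_induct)
  case empty
  show ?case using Ck_on_const by simp
next
  case (insert a I)
  then show ?case using Ck_on_add[OF S, of n "f a" "\<lambda>y. \<Sum>i\<in>I. f i y"] by simp
qed

lemma hderiv_sum:
  fixes f :: "'i \<Rightarrow> 'a::real_normed_vector \<Rightarrow> 'b::real_normed_vector"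
  assumes S: "open S" and I: "finite I"
  shows "(\<And>i. i \<in> I \<Longrightarrow> Ck_on l S (f i)) \<Longrightarrow> x \<in> S \<Longrightarrow> length vs = l \<Longrightarrow>
     hderiv l (\<lambda>y. \<Sum>i\<in>I. f i y) x vs = (\<Sum>i\<in>I. hderiv l (f i) x vs)"
  using I
proof (induction I rule: finite_induct)
  case empty
  show ?case by (simp add: hderiv_zero)
next
  case (insert a I)
  have "Ck_on l S (\<lambda>y. \<Sum>i\<in>I. f i y)" using Ck_on_sum[OF S insert(1)] insert by blast
  then show ?case
    using hderiv_add[OF S, of l "f a" "\<lambda>y. \<Sum>i\<in>I. f i y" x vs] insert by simp
qed

lemma frechet_derivative_bilinear:
  assumes B: "bounded_bilinear B" and "f differentiable at y" "g differentiable at y"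
  shows "frechet_derivative (\<lambda>y. B (f y) (g y)) (at y) v
     = B (f y) (frechet_derivative g (at y) v) + B (frechet_derivative f (at y) v) (g y)"
  by (subst frechet_derivative_at[OF bounded_bilinear.FDERIV[OF B], symmetric])
    (use assms frechet_derivative_works in auto)

lemma Ck_on_bilinear:
  fixes f :: "'a::real_normed_vector \<Rightarrow> 'b::real_normed_vector"
    and g :: "'a \<Rightarrow> 'c::real_normed_vector" and B :: "'b \<Rightarrow> 'c \<Rightarrow> 'd::real_normed_vector"
  assumes B: "bounded_bilinear B" and S: "open S"
  shows "Ck_on n S f \<Longrightarrow> Ck_on n S g \<Longrightarrow> Ck_on n S (\<lambda>y. B (f y) (g y))"
proof (induction n arbitrary: f g)
  case 0
  show ?case unfolding Ck_on_0 differentiable_on_eq_differentiable_at[OF S]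
  proof
    fix x assume x: "x \<in> S"
    have "(f has_derivative frechet_derivative f (at x)) (at x)"
      and "(g has_derivative frechet_derivative g (at x)) (at x)"
      using has_derivative_frechet_derivative_open[OF S _ x] 0 Ck_on_0 by blast+
    from bounded_bilinear.FDERIV[OF B this]
    show "(\<lambda>y. B (f y) (g y)) differentiable at x" unfolding differentiable_def by blast
  qed
next
  case (Suc n)
  have f: "f differentiable_on S" and df: "\<And>v. Ck_on n S (dir_deriv f v)"
    and g: "g differentiable_on S" and dg: "\<And>v. Ck_on n S (dir_deriv g v)"
    using Suc.prems Ck_on_Suc by blast+
  have fn: "Ck_on n S f" "Ck_on n S g" using Suc.prems Ck_on_mono by fastforce+
  have "(\<lambda>y. B (f y) (g y)) differentiable_on S"
    using Ck_on_mono[OF Suc.IH[OF fn], of 0] by (simp add: Ck_on_0)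
  moreover have "Ck_on n S (dir_deriv (\<lambda>y. B (f y) (g y)) v)" for v
  proof (rule Ck_on_cong_open[OF S _ Ck_on_add[OF S Suc.IH[OF fn(1) dg[of v]] Suc.IH[OF df[of v] fn(2)]]])
    fix y assume y: "y \<in> S"
    show "B (f y) (dir_deriv g v y) + B (dir_deriv f v y) (g y) = dir_deriv (\<lambda>y. B (f y) (g y)) v y"
      using frechet_derivative_bilinear[OF B, of f y g v] f g y
      by (simp add: differentiable_on_eq_differentiable_at[OF S])
  qed
  ultimately show ?case using Ck_on_Suc by blast
qed

lemma linear_eq_sum_Basis:
  fixes L :: "'b::euclidean_space \<Rightarrow> 'c::real_normed_vector"
  assumes "linear L"
  shows "L w = (\<Sum>b\<in>Basis. (w \<bullet> b) *\<^sub>R L b)"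
proof -
  have "L w = L (\<Sum>b\<in>Basis. (w \<bullet> b) *\<^sub>R b)" by (simp add: euclidean_representation)
  also have "\<dots> = (\<Sum>b\<in>Basis. (w \<bullet> b) *\<^sub>R L b)"
    by (simp add: linear_sum[OF assms] linear_scale[OF assms])
  finally show ?thesis .
qed

lemma has_derivative_compose_open:
  assumes "open U" "open W" "u ` U \<subseteq> W" "u differentiable_on U" "f differentiable_on W" "y \<in> U"
  shows "((\<lambda>y. f (u y)) has_derivative
           (\<lambda>h. frechet_derivative f (at (u y)) (frechet_derivative u (at y) h))) (at y)"
  using diff_chain_at[OF has_derivative_frechet_derivative_open[of U u y]
                         has_derivative_frechet_derivative_open[of W f "u y"]] assms
  by (auto simp: o_def)

lemma Ck_on_compose:
  fixes u :: "'a::real_normed_vector \<Rightarrow> 'b::euclidean_space" and f :: "'b \<Rightarrow> 'c::real_normed_vector"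
  assumes U: "open U" and W: "open W" and uW: "u ` U \<subseteq> W" and u: "smooth_on U u"
  shows "smooth_on W f \<Longrightarrow> Ck_on n U (\<lambda>y. f (u y))"
proof (induction n arbitrary: f)
  case 0
  have "((\<lambda>y. f (u y)) has_derivative
             (\<lambda>h. frechet_derivative f (at (u y)) (frechet_derivative u (at y) h))) (at y)"
    if "y \<in> U" for y
    using has_derivative_compose_open[OF U W uW smooth_on_imp_differentiable_on[OF u]
          smooth_on_imp_differentiable_on[OF 0] that] .
  then show ?case
    unfolding Ck_on_0 differentiable_on_eq_differentiable_at[OF U] differentiable_def by blast
next
  case (Suc n)
  have f: "f differentiable_on W" and ud: "u differentiable_on U"
    using smooth_on_imp_differentiable_on[OF Suc.prems] smooth_on_imp_differentiable_on[OF u] .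
  have D: "((\<lambda>y. f (u y)) has_derivative
             (\<lambda>h. frechet_derivative f (at (u y)) (frechet_derivative u (at y) h))) (at y)"
    if "y \<in> U" for y
    using has_derivative_compose_open[OF U W uW ud f that] .
  then have "(\<lambda>y. f (u y)) differentiable_on U"
    unfolding differentiable_on_eq_differentiable_at[OF U] differentiable_def by blast
  moreover have "Ck_on n U (dir_deriv (\<lambda>y. f (u y)) v)" for v
  proof (rule Ck_on_cong_open[OF U])
    show "Ck_on n U (\<lambda>y. \<Sum>b\<in>Basis. (dir_deriv u v y \<bullet> b) *\<^sub>R dir_deriv f b (u y))"
    proof (rule Ck_on_sum[OF U finite_Basis])
      fix b :: 'b
      have "Ck_on n U (dir_deriv u v)"
        using smooth_on_dir_deriv[OF u] unfolding smooth_on_iff_Ck_on ..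
      then have "Ck_on n U (\<lambda>y. dir_deriv u v y \<bullet> b)"
        by (rule Ck_on_bounded_linear[OF bounded_linear_inner_left U])
      moreover have "Ck_on n U (\<lambda>y. dir_deriv f b (u y))"
        by (rule Suc.IH[OF smooth_on_dir_deriv[OF Suc.prems]])
      ultimately show "Ck_on n U (\<lambda>y. (dir_deriv u v y \<bullet> b) *\<^sub>R dir_deriv f b (u y))"
        by (rule Ck_on_bilinear[OF bounded_bilinear_scaleR U])
    qed
  next
    fix y assume y: "y \<in> U"
    have "f differentiable at (u y)"
      using f uW y differentiable_on_eq_differentiable_at[OF W] by blast
    then have "linear (frechet_derivative f (at (u y)))"
      by (rule linear_frechet_derivative)
    then have "dir_deriv (\<lambda>y. f (u y)) v y = (\<Sum>b\<in>Basis. (dir_deriv u v y \<bullet> b) *\<^sub>R dir_deriv f b (u y))"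
      by (subst frechet_derivative_at[OF D[OF y], symmetric]) (rule linear_eq_sum_Basis)
    then show "(\<Sum>b\<in>Basis. (dir_deriv u v y \<bullet> b) *\<^sub>R dir_deriv f b (u y)) = dir_deriv (\<lambda>y. f (u y)) v y"
      by simp
  qed
  ultimately show ?case using Ck_on_Suc by blast
qed

lemma smooth_on_compose:
  fixes u :: "'a::real_normed_vector \<Rightarrow> 'b::euclidean_space" and f :: "'b \<Rightarrow> 'c::real_normed_vector"
  assumes "open U" "open W" "u ` U \<subseteq> W" "smooth_on U u" "smooth_on W f"
  shows "smooth_on U (\<lambda>y. f (u y))"
  using Ck_on_compose[OF assms] smooth_on_iff_Ck_on by blast

lemma vanishes_to_order_dir_deriv:
  "vanishes_to_order (Suc k) f x \<Longrightarrow> vanishes_to_order k (dir_deriv f v) x"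
  unfolding vanishes_to_order_def
proof (intro allI impI)
  fix l and vs :: "'a list"
  assume "\<forall>l<Suc k. \<forall>vs. length vs = l \<longrightarrow> hderiv l f x vs = 0" "l < k" "length vs = l"
  then show "hderiv l (dir_deriv f v) x vs = 0"
    using hderiv_snoc[of vs l f x v] by simp
qed

lemma vanishes_to_order_bounded_linear:
  fixes f :: "'a::real_normed_vector \<Rightarrow> 'b::real_normed_vector" and T :: "'b \<Rightarrow> 'c::real_normed_vector"
  assumes "bounded_linear T" "open S" "x \<in> S" "Ck_on k S f" "vanishes_to_order k f x"
  shows "vanishes_to_order k (\<lambda>y. T (f y)) x"
  unfolding vanishes_to_order_def
proof (intro allI impI)
  fix l and vs :: "'a list" assume "l < k" "length vs = l"
  then show "hderiv l (\<lambda>y. T (f y)) x vs = 0"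
    using hderiv_bounded_linear[OF assms(1,2) Ck_on_mono[OF assms(4)] assms(3)] assms(5)
      linear_simps(3)[OF assms(1)]
    unfolding vanishes_to_order_def by simp
qed

lemma hderiv_bilinear_vanishing:
  fixes f :: "'a::real_normed_vector \<Rightarrow> 'b::real_normed_vector"
    and g :: "'a \<Rightarrow> 'c::real_normed_vector" and B :: "'b \<Rightarrow> 'c \<Rightarrow> 'd::real_normed_vector"
  assumes B: "bounded_bilinear B" and S: "open S" and x: "x \<in> S"
  shows "Ck_on k S f \<Longrightarrow> Ck_on k S g \<Longrightarrow> vanishes_to_order k g x \<Longrightarrow> length vs = k \<Longrightarrow>
    hderiv k (\<lambda>y. B (f y) (g y)) x vs = B (f x) (hderiv k g x vs)"
proof (induction k arbitrary: f g vs)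
  case (Suc k)
  obtain ws v where vs: "vs = ws @ [v]" and ws: "length ws = k"
    using Suc.prems(4) by (metis length_Suc_conv_rev)
  have f: "f differentiable_on S" and df: "Ck_on k S (dir_deriv f v)"
    and g: "g differentiable_on S" and dg: "Ck_on k S (dir_deriv g v)"
    using Suc.prems(1,2) Ck_on_Suc by blast+
  have fk: "Ck_on k S f" "Ck_on k S g" using Ck_on_mono[OF Suc.prems(1)] Ck_on_mono[OF Suc.prems(2)] by simp_all
  have gk: "vanishes_to_order k g x" and "hderiv k g x ws = 0"
    using Suc.prems(3) ws unfolding vanishes_to_order_def by auto
  have "hderiv (Suc k) (\<lambda>y. B (f y) (g y)) x vs = hderiv k (dir_deriv (\<lambda>y. B (f y) (g y)) v) x ws"
    unfolding vs by (rule hderiv_snoc[OF ws])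
  also have "\<dots> = hderiv k (\<lambda>y. B (f y) (dir_deriv g v y) + B (dir_deriv f v y) (g y)) x ws"
    using frechet_derivative_bilinear[OF B, of f _ g v] f g
    by (intro hderiv_cong_open[OF S x]) (simp add: differentiable_on_eq_differentiable_at[OF S])
  also have "\<dots> = hderiv k (\<lambda>y. B (f y) (dir_deriv g v y)) x ws + hderiv k (\<lambda>y. B (dir_deriv f v y) (g y)) x ws"
    by (rule hderiv_add[OF S Ck_on_bilinear[OF B S fk(1) dg] Ck_on_bilinear[OF B S df fk(2)] x ws])
  also have "\<dots> = B (f x) (hderiv k (dir_deriv g v) x ws) + B (dir_deriv f v x) (hderiv k g x ws)"
    using Suc.IH[OF fk(1) dg vanishes_to_order_dir_deriv[OF Suc.prems(3)] ws] Suc.IH[OF df fk(2) gk ws]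
    by simp
  also have "\<dots> = B (f x) (hderiv (Suc k) g x vs)"
    unfolding vs hderiv_snoc[OF ws] \<open>hderiv k g x ws = 0\<close> bounded_bilinear.zero_right[OF B] by simp
  finally show ?case .
qed simp

lemma hderiv_sum_bilinear_vanishing:
  fixes f :: "'i \<Rightarrow> 'a::real_normed_vector \<Rightarrow> 'b::real_normed_vector"
    and g :: "'i \<Rightarrow> 'a \<Rightarrow> 'c::real_normed_vector" and B :: "'b \<Rightarrow> 'c \<Rightarrow> 'd::real_normed_vector"
  assumes B: "bounded_bilinear B" and S: "open S" and x: "x \<in> S" and I: "finite I"
    and f: "\<And>i. i \<in> I \<Longrightarrow> Ck_on k S (f i)" and g: "\<And>i. i \<in> I \<Longrightarrow> Ck_on k S (g i)"
    and vanish: "\<And>i. i \<in> I \<Longrightarrow> vanishes_to_order k (g i) x" and vs: "length vs = k"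
  shows "hderiv k (\<lambda>y. \<Sum>i\<in>I. B (f i y) (g i y)) x vs = (\<Sum>i\<in>I. B (f i x) (hderiv k (g i) x vs))"
proof -
  have "hderiv k (\<lambda>y. \<Sum>i\<in>I. B (f i y) (g i y)) x vs = (\<Sum>i\<in>I. hderiv k (\<lambda>y. B (f i y) (g i y)) x vs)"
    using Ck_on_bilinear[OF B S f g] by (intro hderiv_sum[OF S I _ x vs])
  also have "\<dots> = (\<Sum>i\<in>I. B (f i x) (hderiv k (g i) x vs))"
    using hderiv_bilinear_vanishing[OF B S x f g vanish vs] by simp
  finally show ?thesis .
qed

section \<open>Symmetry of higher derivatives\<close>

lemma norm_increment_le_vector_derivative_bound:
  fixes f :: "real \<Rightarrow> 'b::real_normed_vector"
  assumes t: "0 < t"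
    and der: "\<And>s. s \<in> {0..t} \<Longrightarrow> (f has_vector_derivative f' s) (at s)"
    and bnd: "\<And>s. s \<in> {0..t} \<Longrightarrow> norm (f' s) \<le> M"
  shows "norm (f t - f 0) \<le> t * M"
proof -
  have "continuous_on {0..t} f"
    using der has_vector_derivative_continuous continuous_at_imp_continuous_on by blast
  moreover have "continuous_on {0..t} (\<lambda>s. s * M)" by (intro continuous_intros)
  moreover have "((\<lambda>s. s * M) has_vector_derivative M) (at s)" for s
    by (auto intro!: derivative_eq_intros)
  ultimately have "norm (f t - f 0) \<le> t * M - 0 * M"
    using der bnd by (intro differentiable_bound_general[where f' = f', OF t]) auto
  then show ?thesis by simp
qed

lemma increment_estimate_segment:
  fixes F :: "'a::real_normed_vector \<Rightarrow> 'b::real_normed_vector"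
  assumes t: "0 < t"
    and der: "\<And>r. r \<in> {0..t} \<Longrightarrow> (F has_derivative F' (y + r *\<^sub>R b)) (at (y + r *\<^sub>R b))"
    and bnd: "\<And>r. r \<in> {0..t} \<Longrightarrow> norm (F' (y + r *\<^sub>R b) b - c) \<le> e"
  shows "norm (F (y + t *\<^sub>R b) - F y - t *\<^sub>R c) \<le> t * e"
proof -
  have "((\<lambda>r. F (y + r *\<^sub>R b) - r *\<^sub>R c) has_vector_derivative F' (y + r *\<^sub>R b) b - c) (at r)"
    if r: "r \<in> {0..t}" for r
  proof -
    have "((F \<circ> (\<lambda>r. y + r *\<^sub>R b)) has_derivative (F' (y + r *\<^sub>R b) \<circ> (\<lambda>h. h *\<^sub>R b))) (at r)"
      by (rule diff_chain_at[of "\<lambda>r. y + r *\<^sub>R b", OF _ der[OF r]]) (auto intro!: derivative_eq_intros)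
    moreover have "linear (F' (y + r *\<^sub>R b))" using has_derivative_linear[OF der[OF r]] .
    ultimately have "((\<lambda>r. F (y + r *\<^sub>R b)) has_vector_derivative F' (y + r *\<^sub>R b) b) (at r)"
      by (simp add: has_vector_derivative_def o_def linear_scale)
    then show ?thesis by (auto intro!: derivative_eq_intros)
  qed
  from norm_increment_le_vector_derivative_bound[OF t this bnd]
  show ?thesis by (simp add: algebra_simps)
qed

lemma second_difference_estimate:
  fixes G :: "'a::real_normed_vector \<Rightarrow> 'b::real_normed_vector"
  assumes t: "0 < t"
    and K: "\<And>s r. s \<in> {0..t} \<Longrightarrow> r \<in> {0..t} \<Longrightarrow> x + s *\<^sub>R a + r *\<^sub>R b \<in> K"
    and DG: "\<And>y. y \<in> K \<Longrightarrow> (G has_derivative DG y) (at y)"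
    and DK: "\<And>y. y \<in> K \<Longrightarrow> ((\<lambda>z. DG z a) has_derivative DK y) (at y)"
    and bnd: "\<And>y. y \<in> K \<Longrightarrow> norm (DK y b - c) \<le> e"
  shows "norm (G (x + t *\<^sub>R a + t *\<^sub>R b) - G (x + t *\<^sub>R a) - G (x + t *\<^sub>R b) + G x - (t * t) *\<^sub>R c)
           \<le> t * (t * e)"
proof -
  have inner: "norm (DG (x + s *\<^sub>R a + t *\<^sub>R b) a - DG (x + s *\<^sub>R a) a - t *\<^sub>R c) \<le> t * e"
    if s: "s \<in> {0..t}" for s
    using increment_estimate_segment[OF t, of "\<lambda>z. DG z a" DK "x + s *\<^sub>R a" b c e]
      DK[OF K[OF s]] bnd[OF K[OF s]] by simp
  have "((\<lambda>z. G (z + t *\<^sub>R b) - G z) has_derivative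
          (\<lambda>h. DG (x + s *\<^sub>R a + t *\<^sub>R b) h - DG (x + s *\<^sub>R a) h)) (at (x + s *\<^sub>R a))"
    if s: "s \<in> {0..t}" for s
  proof -
    have "((G \<circ> (\<lambda>z. z + t *\<^sub>R b)) has_derivative (DG (x + s *\<^sub>R a + t *\<^sub>R b) \<circ> id)) (at (x + s *\<^sub>R a))"
      using t s by (intro diff_chain_at DG K) (auto intro!: derivative_eq_intros)
    moreover have "(G has_derivative DG (x + s *\<^sub>R a)) (at (x + s *\<^sub>R a))"
      using DG K[OF s, of 0] t by simp
    ultimately show ?thesis by (auto simp: o_def intro!: derivative_eq_intros)
  qed
  from increment_estimate_segment[OF t,
      of "\<lambda>z. G (z + t *\<^sub>R b) - G z" "\<lambda>z h. DG (z + t *\<^sub>R b) h - DG z h" x a "t *\<^sub>R c" "t * e"]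
    this inner
  show ?thesis by (simp add: algebra_simps)
qed

lemma small_parallelograms_in_ball:
  fixes x a b :: "'a::real_normed_vector"
  assumes "0 < d"
  obtains t where "0 < t"
    and "\<And>s r. s \<in> {0..t} \<Longrightarrow> r \<in> {0..t} \<Longrightarrow> x + s *\<^sub>R a + r *\<^sub>R b \<in> ball x d"
    and "\<And>s r. s \<in> {0..t} \<Longrightarrow> r \<in> {0..t} \<Longrightarrow> x + s *\<^sub>R b + r *\<^sub>R a \<in> ball x d"
proof
  define t where "t = d / (2 * (norm a + norm b + 1))"
  show t: "0 < t" using assms by (simp add: t_def add_nonneg_pos)
  have "t * (norm a + norm b) < t * (2 * (norm a + norm b + 1))"
    using t by (intro mult_strict_left_mono) (auto simp: add_nonneg_pos)
  also have "\<dots> = d"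
    unfolding t_def using norm_ge_zero[of a] norm_ge_zero[of b] by (simp, linarith)
  finally have td: "t * norm a + t * norm b < d" by (simp add: distrib_left)
  have small: "norm (s *\<^sub>R a + r *\<^sub>R b) < d" if "s \<in> {0..t}" "r \<in> {0..t}" for s r
  proof -
    have "norm (s *\<^sub>R a + r *\<^sub>R b) \<le> s * norm a + r * norm b"
      using that norm_triangle_ineq[of "s *\<^sub>R a" "r *\<^sub>R b"] by simp
    also have "\<dots> \<le> t * norm a + t * norm b"
      using that by (intro add_mono mult_right_mono) auto
    finally show ?thesis using td by simp
  qed
  show "x + s *\<^sub>R a + r *\<^sub>R b \<in> ball x d" "x + s *\<^sub>R b + r *\<^sub>R a \<in> ball x d"
    if "s \<in> {0..t}" "r \<in> {0..t}" for s r
    using small[OF that] small[OF that(2,1)] by (simp_all add: dist_norm norm_minus_commute add.commute)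
qed

lemma dir_deriv_commute:
  fixes G :: "'a::real_normed_vector \<Rightarrow> 'b::real_normed_vector"
  assumes S: "open S" and x: "x \<in> S" and G: "G differentiable_on S"
    and Ga: "dir_deriv G a differentiable_on S" and Gb: "dir_deriv G b differentiable_on S"
    and cont_ab: "isCont (dir_deriv (dir_deriv G a) b) x"
    and cont_ba: "isCont (dir_deriv (dir_deriv G b) a) x"
  shows "dir_deriv (dir_deriv G a) b x = dir_deriv (dir_deriv G b) a x"
proof -
  define c1 where "c1 = dir_deriv (dir_deriv G a) b x"
  define c2 where "c2 = dir_deriv (dir_deriv G b) a x"
  have "norm (c1 - c2) \<le> 2 * e" if e: "0 < e" for e
  proof -
    obtain d0 where d0: "0 < d0" "ball x d0 \<subseteq> S" using S x open_contains_ball by blast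
    obtain d1 where d1: "0 < d1" "\<And>y. dist y x < d1 \<Longrightarrow> dist (dir_deriv (dir_deriv G a) b y) c1 < e"
      using cont_ab e unfolding continuous_at_eps_delta c1_def by blast
    obtain d2 where d2: "0 < d2" "\<And>y. dist y x < d2 \<Longrightarrow> dist (dir_deriv (dir_deriv G b) a y) c2 < e"
      using cont_ba e unfolding continuous_at_eps_delta c2_def by blast
    define d where "d = min d0 (min d1 d2)"
    have "0 < d" using d0 d1 d2 by (simp add: d_def)
    have ball: "y \<in> S" "dist y x < d1" "dist y x < d2" if "y \<in> ball x d" for y
      using that d0 by (auto simp: d_def dist_commute)
    obtain t where t: "0 < t"
      and Kab: "\<And>s r. s \<in> {0..t} \<Longrightarrow> r \<in> {0..t} \<Longrightarrow> x + s *\<^sub>R a + r *\<^sub>R b \<in> ball x d"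
      and Kba: "\<And>s r. s \<in> {0..t} \<Longrightarrow> r \<in> {0..t} \<Longrightarrow> x + s *\<^sub>R b + r *\<^sub>R a \<in> ball x d"
      using small_parallelograms_in_ball[OF \<open>0 < d\<close>, where x = x and a = a and b = b] by blast
    have DG: "(G has_derivative frechet_derivative G (at y)) (at y)" if "y \<in> ball x d" for y
      using has_derivative_frechet_derivative_open[OF S G ball(1)[OF that]] .
    have DGa: "(dir_deriv G a has_derivative frechet_derivative (dir_deriv G a) (at y)) (at y)"
      and DGb: "(dir_deriv G b has_derivative frechet_derivative (dir_deriv G b) (at y)) (at y)"
      if "y \<in> ball x d" for y
      using has_derivative_frechet_derivative_open[OF S _ ball(1)[OF that]] Ga Gb by auto
    have c1: "norm (dir_deriv (dir_deriv G a) b y - c1) \<le> e"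
      and c2: "norm (dir_deriv (dir_deriv G b) a y - c2) \<le> e" if "y \<in> ball x d" for y
      using d1(2)[OF ball(2)[OF that]] d2(2)[OF ball(3)[OF that]] by (simp_all add: dist_norm)
    define \<Delta> where "\<Delta> = G (x + t *\<^sub>R a + t *\<^sub>R b) - G (x + t *\<^sub>R a) - G (x + t *\<^sub>R b) + G x"
    have "norm (\<Delta> - (t * t) *\<^sub>R c1) \<le> t * (t * e)"
      using second_difference_estimate[OF t Kab DG DGa c1] unfolding \<Delta>_def .
    moreover have "norm (\<Delta> - (t * t) *\<^sub>R c2) \<le> t * (t * e)"
      using second_difference_estimate[OF t Kba DG DGb c2]
      unfolding \<Delta>_def by (simp add: algebra_simps)
    ultimately have "norm ((t * t) *\<^sub>R (c1 - c2)) \<le> (t * t) * (2 * e)"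
      using norm_triangle_ineq4[of "\<Delta> - (t * t) *\<^sub>R c2" "\<Delta> - (t * t) *\<^sub>R c1"]
      by (simp add: algebra_simps)
    then show ?thesis using t by simp
  qed
  then have "norm (c1 - c2) \<le> 0 + e" if "0 < e" for e
    using that \<open>\<And>e. 0 < e \<Longrightarrow> norm (c1 - c2) \<le> 2 * e\<close>[of "e / 2"] by simp
  then have "norm (c1 - c2) \<le> 0" by (rule field_le_epsilon)
  then show ?thesis by (simp add: c1_def c2_def)
qed

lemma hderiv_swap:
  fixes f :: "'a::real_normed_vector \<Rightarrow> 'b::real_normed_vector"
  assumes S: "open S" and f: "smooth_on S f" and x: "x \<in> S" and rest: "length rest = m"
  shows "hderiv (Suc (Suc m)) f x (a # b # rest) = hderiv (Suc (Suc m)) f x (b # a # rest)"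
proof -
  have diff: "(\<lambda>y. hderiv (length vs) f y vs) differentiable_on S" for vs
    using f unfolding smooth_on_def by blast
  have cont: "isCont (\<lambda>y. hderiv (length vs) f y vs) x" for vs
    using differentiable_imp_continuous_on[OF diff] continuous_on_eq_continuous_at[OF S] x by blast
  show ?thesis
    using dir_deriv_commute[OF S x diff[of rest] diff[of "a # rest", simplified]
        diff[of "b # rest", simplified] cont[of "b # a # rest", simplified]
        cont[of "a # b # rest", simplified]] rest
    by simp
qed

lemma hderiv_mset_eq:
  fixes f :: "'a::real_normed_vector \<Rightarrow> 'b::real_normed_vector"
  assumes S: "open S" and f: "smooth_on S f"
  shows "length vs = l \<Longrightarrow> mset vs = mset ws \<Longrightarrow> x \<in> S \<Longrightarrow> hderiv l f x vs = hderiv l f x ws"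
proof (induction l arbitrary: x vs ws)
  case (Suc l)
  have tail: "hderiv (Suc l) f x (c # ys) = hderiv (Suc l) f x (c # zs)"
    if "mset ys = mset zs" "length ys = l" for c ys zs
    using frechet_derivative_cong_open[OF S Suc.prems(3), of "\<lambda>y. hderiv l f y ys" "\<lambda>y. hderiv l f y zs"]
      Suc.IH[OF that(2,1)] by simp
  obtain a vs' where vs: "vs = a # vs'" "length vs' = l"
    using Suc.prems(1) by (metis length_Suc_conv)
  obtain b ws' where ws: "ws = b # ws'"
    using Suc.prems(1,2) by (metis length_Suc_conv size_mset)
  have eq: "add_mset a (mset vs') = add_mset b (mset ws')" using Suc.prems(2) vs ws by simp
  show ?case
  proof (cases "a = b")
    case True
    then show ?thesis using tail eq vs ws by simp
  next
    case False
    \<comment> \<open>bring \<open>b\<close> to the second slot of \<open>vs\<close>, swap the first two slots, and compare tails\<close>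
    define rest where "rest = remove1 b vs'"
    have "b \<in> set vs'" using eq False by (metis insert_noteq_member set_mset_mset)
    then have m1: "mset vs' = mset (b # rest)" by (simp add: rest_def)
    then have lr: "length vs' = Suc (length rest)" by (metis size_mset length_Cons)
    have m2: "mset (a # rest) = mset ws'" using eq m1 by simp
    have "hderiv (Suc l) f x vs = hderiv (Suc l) f x (a # b # rest)"
      using tail[OF m1 vs(2)] vs by simp
    also have "\<dots> = hderiv (Suc l) f x (b # a # rest)"
      using hderiv_swap[OF S f Suc.prems(3), of rest "length rest" a b] lr vs(2) by simp
    also have "\<dots> = hderiv (Suc l) f x ws"
      using tail[OF m2] lr vs(2) ws by simp
    finally show ?thesis .
  qed
qed simp

section \<open>Higher derivatives of pseudo-holomorphic maps\<close>

lemma jet_vanishes_imp_vanishes_to_order_dir_deriv: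
  "jet_vanishes k u z \<Longrightarrow> vanishes_to_order k (dir_deriv u v) z"
  unfolding jet_vanishes_def vanishes_to_order_def
proof (intro allI impI)
  fix l and vs :: "complex list"
  assume "\<forall>l\<in>{1..k}. \<forall>vs. length vs = l \<longrightarrow> hderiv l u z vs = 0" "l < k" "length vs = l"
  then show "hderiv l (dir_deriv u v) z vs = 0"
    using hderiv_snoc[of vs l u z v] by simp
qed

lemma jet_vanishes_Suc_iff:
  "jet_vanishes k u z \<Longrightarrow>
     jet_vanishes (Suc k) u z \<longleftrightarrow> (\<forall>vs. length vs = Suc k \<longrightarrow> hderiv (Suc k) u z vs = 0)"
  unfolding jet_vanishes_def by (simp add: atLeastAtMostSuc_conv)

lemma hderiv_apply_linear_field_vanishing:
  fixes A :: "'a::real_normed_vector \<Rightarrow> 'b::euclidean_space \<Rightarrow> 'c::real_normed_vector"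
  assumes S: "open S" and x: "x \<in> S" and lin: "\<And>y. y \<in> S \<Longrightarrow> linear (A y)"
    and A: "\<And>b. Ck_on k S (\<lambda>y. A y b)" and g: "Ck_on k S g" and vanish: "vanishes_to_order k g x"
    and vs: "length vs = k"
  shows "hderiv k (\<lambda>y. A y (g y)) x vs = A x (hderiv k g x vs)"
proof -
  have "hderiv k (\<lambda>y. A y (g y)) x vs = hderiv k (\<lambda>y. \<Sum>b\<in>Basis. (g y \<bullet> b) *\<^sub>R A y b) x vs"
    using linear_eq_sum_Basis[OF lin] by (intro hderiv_cong_open[OF S x]) blast
  also have "\<dots> = (\<Sum>b\<in>Basis. hderiv k (\<lambda>y. g y \<bullet> b) x vs *\<^sub>R A x b)"
    by (rule hderiv_sum_bilinear_vanishing[OF bounded_bilinear.flip[OF bounded_bilinear_scaleR]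
          S x finite_Basis A Ck_on_bounded_linear[OF bounded_linear_inner_left S g]
          vanishes_to_order_bounded_linear[OF bounded_linear_inner_left S x g vanish] vs])
  also have "\<dots> = (\<Sum>b\<in>Basis. (hderiv k g x vs \<bullet> b) *\<^sub>R A x b)"
    using hderiv_bounded_linear[OF bounded_linear_inner_left S g x vs] by simp
  also have "\<dots> = A x (hderiv k g x vs)"
    by (rule linear_eq_sum_Basis[OF lin[OF x], symmetric])
  finally show ?thesis .
qed

lemma hderiv_apply_vanishing_linear_field:
  fixes A :: "'a::real_normed_vector \<Rightarrow> 'b::euclidean_space \<Rightarrow> 'c::real_normed_vector"
  assumes S: "open S" and x: "x \<in> S" and lin: "\<And>y. y \<in> S \<Longrightarrow> linear (A y)"
    and A: "\<And>b. Ck_on k S (\<lambda>y. A y b)" and vanish: "\<And>b. vanishes_to_order k (\<lambda>y. A y b) x"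
    and c: "Ck_on k S c" and vs: "length vs = k"
  shows "hderiv k (\<lambda>y. A y (c y)) x vs = hderiv k (\<lambda>y. A y (c x)) x vs"
proof -
  have "hderiv k (\<lambda>y. A y (c y)) x vs = hderiv k (\<lambda>y. \<Sum>b\<in>Basis. (c y \<bullet> b) *\<^sub>R A y b) x vs"
    using linear_eq_sum_Basis[OF lin] by (intro hderiv_cong_open[OF S x]) blast
  also have "\<dots> = (\<Sum>b\<in>Basis. (c x \<bullet> b) *\<^sub>R hderiv k (\<lambda>y. A y b) x vs)"
    by (rule hderiv_sum_bilinear_vanishing[OF bounded_bilinear_scaleR S x finite_Basis
          Ck_on_bounded_linear[OF bounded_linear_inner_left S c] A vanish vs])
  also have "\<dots> = hderiv k (\<lambda>y. \<Sum>b\<in>Basis. (c x \<bullet> b) *\<^sub>R A y b) x vs"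
    by (rule hderiv_sum_bilinear_vanishing[OF bounded_bilinear_scaleR S x finite_Basis
          Ck_on_const A vanish vs, symmetric])
  also have "\<dots> = hderiv k (\<lambda>y. A y (c x)) x vs"
    using linear_eq_sum_Basis[OF lin] by (intro hderiv_cong_open[OF S x]) (blast intro: sym)
  finally show ?thesis .
qed

lemma hderiv_holomorphic_last_slot:
  fixes u :: "complex \<Rightarrow> 'm::euclidean_space"
  assumes U: "open U" and W: "open W"
    and j: "almost_complex_structure U j" and J: "almost_complex_structure W J"
    and uW: "u ` U \<subseteq> W" and u: "smooth_on U u" and hol: "jJ_holomorphic U j J u"
    and z0: "z0 \<in> U" and jet: "jet_vanishes k u z0" and ws: "length ws = k"
  shows "hderiv (Suc k) u z0 (ws @ [j z0 w]) = J (u z0) (hderiv (Suc k) u z0 (ws @ [w]))"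
proof -
  have du: "Ck_on k U (dir_deriv u v)" for v
    using smooth_on_dir_deriv[OF u] unfolding smooth_on_iff_Ck_on ..
  have du_vanish: "vanishes_to_order k (dir_deriv u v) z0" for v
    using jet_vanishes_imp_vanishes_to_order_dir_deriv[OF jet] .
  have du_lin: "linear (frechet_derivative u (at z))" if "z \<in> U" for z
    using smooth_on_imp_differentiable_on[OF u] that
    by (simp add: differentiable_on_eq_differentiable_at[OF U] linear_frechet_derivative)
  have "smooth_on U (\<lambda>z. j z w)"
    using j unfolding almost_complex_structure_def by blast
  then have "Ck_on k U (\<lambda>z. j z w)"
    unfolding smooth_on_iff_Ck_on ..
  then have "hderiv k (dir_deriv u (j z0 w)) z0 ws = hderiv k (\<lambda>z. frechet_derivative u (at z) (j z w)) z0 ws"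
    using hderiv_apply_vanishing_linear_field[where A = "\<lambda>z. frechet_derivative u (at z)",
          OF U z0 du_lin du du_vanish _ ws] by simp
  also have "\<dots> = hderiv k (\<lambda>z. J (u z) (dir_deriv u w z)) z0 ws"
    using hol unfolding jJ_holomorphic_def by (intro hderiv_cong_open[OF U z0]) simp
  also have "\<dots> = J (u z0) (hderiv k (dir_deriv u w) z0 ws)"
  proof (rule hderiv_apply_linear_field_vanishing[where A = "\<lambda>z. J (u z)", OF U z0 _ _ du du_vanish ws])
    show "linear (J (u z))" if "z \<in> U" for z
      using J uW that unfolding almost_complex_structure_def by blast
    fix b
    have "smooth_on W (\<lambda>y. J y b)" using J unfolding almost_complex_structure_def by blast
    then have "smooth_on U (\<lambda>z. J (u z) b)" by (rule smooth_on_compose[OF U W uW u])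
    then show "Ck_on k U (\<lambda>z. J (u z) b)" unfolding smooth_on_iff_Ck_on ..
  qed
  finally show ?thesis
    by (simp add: hderiv_snoc[OF ws])
qed

lemma hderiv_holomorphic_slot:
  fixes u :: "complex \<Rightarrow> 'm::euclidean_space"
  assumes U: "open U" and "open W"
    and "almost_complex_structure U j" and "almost_complex_structure W J"
    and "u ` U \<subseteq> W" and u: "smooth_on U u" and "jJ_holomorphic U j J u"
    and z0: "z0 \<in> U" and "jet_vanishes k u z0"
    and vs: "length vs = Suc k" and i: "i < Suc k"
  shows "hderiv (Suc k) u z0 (vs[i := j z0 (vs ! i)]) = J (u z0) (hderiv (Suc k) u z0 vs)"
proof -
  define ws where "ws = take i vs @ drop (Suc i) vs"
  have "length ws = k" using vs i by (simp add: ws_def)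
  have "mset vs = mset (ws @ [vs ! i])"
    using arg_cong[where f = mset, OF id_take_nth_drop[of i vs]] i vs by (simp add: ws_def)
  then have "hderiv (Suc k) u z0 vs = hderiv (Suc k) u z0 (ws @ [vs ! i])"
    by (rule hderiv_mset_eq[OF U u vs _ z0])
  moreover have "mset (vs[i := j z0 (vs ! i)]) = mset (ws @ [j z0 (vs ! i)])"
    using i vs by (simp add: ws_def upd_conv_take_nth_drop)
  then have "hderiv (Suc k) u z0 (vs[i := j z0 (vs ! i)]) = hderiv (Suc k) u z0 (ws @ [j z0 (vs ! i)])"
    using hderiv_mset_eq[OF U u _ _ z0] vs by simp
  ultimately show ?thesis
    using hderiv_holomorphic_last_slot[OF assms(1-9) \<open>length ws = k\<close>] by simp
qed

lemma pihol_aux_complex_multilinear: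
  assumes Jx: "\<And>y. Jx (Jx y) = - y"
    and A: "\<And>vs i. length vs = n \<Longrightarrow> i < n \<Longrightarrow> A (vs[i := jz (vs ! i)]) = Jx (A vs)"
  shows "i \<le> n \<Longrightarrow> length vs = n \<Longrightarrow> pihol_aux Jx jz i A vs = A vs"
proof (induction i arbitrary: vs)
  case (Suc i)
  then have "pihol_aux Jx jz (Suc i) A vs = (1/2) *\<^sub>R (A vs - Jx (A (vs[i := jz (vs ! i)])))"
    by (simp add: slot_proj_def)
  also have "\<dots> = A vs"
    using A[of vs i] Jx Suc.prems by (simp add: scaleR_2[symmetric])
  finally show ?case .
qed simp

lemma pi_hol_complex_multilinear:
  assumes "\<And>y. Jx (Jx y) = - y"
    and "\<And>vs i. length vs = n \<Longrightarrow> i < n \<Longrightarrow> A (vs[i := jz (vs ! i)]) = Jx (A vs)"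
    and "length vs = n"
  shows "pi_hol Jx jz n A vs = A vs"
  unfolding pi_hol_def using pihol_aux_complex_multilinear[OF assms(1,2) order.refl assms(3)] .

theorem lemma2p2:
  fixes U :: "complex set" and W :: "'m::euclidean_space set"
    and j :: "complex \<Rightarrow> complex \<Rightarrow> complex" and J :: "'m \<Rightarrow> 'm \<Rightarrow> 'm"
    and u :: "complex \<Rightarrow> 'm" and z0 :: complex and k :: nat
  assumes "open U" and "open W"
    and "almost_complex_structure U j" and "almost_complex_structure W J"
    and "u ` U \<subseteq> W" and "smooth_on U u"
    and "jJ_holomorphic U j J u"
    and "z0 \<in> U" and "jet_vanishes k u z0"
  shows "jet_vanishes (k + 1) u z0 \<longleftrightarrow>
         (\<forall>vs. length vs = k + 1 \<longrightarrow> principal_hol_jet (k + 1) J j u z0 vs = 0)"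
proof -
  have "J (u z0) (J (u z0) y) = - y" for y
    using assms(4,5,8) unfolding almost_complex_structure_def by blast
  then have "principal_hol_jet (Suc k) J j u z0 vs = hderiv (Suc k) u z0 vs" if "length vs = Suc k" for vs
    unfolding principal_hol_jet_def
    using pi_hol_complex_multilinear[where A = "hderiv (Suc k) u z0",
        OF _ hderiv_holomorphic_slot[OF assms] that] by blast
  then show ?thesis
    using jet_vanishes_Suc_iff[OF assms(9)] by auto
qed

end
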